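(* For every $\rho\in\mathcal D(\mathcal H_V)$ with $\mathrm{Tr}(\rho)=1$ there exists a quantum while-program $S^\rho$ such that $\llbracket S^\rho\rrbracket(\sigma)=\mathrm{Tr}(\sigma)\,\rho$ for all $\sigma\in\mathcal D(\mathcal H_V)$. Consequently, for any abstraction map $\alpha:\mathcal Q\to\mathcal A$ into a well-structured abstract domain, any program $S$ and any $R\subseteq\mathcal D(\mathcal H_V)$ with $R\neq\{0\}$, $\alpha(\llbracket S^\rho;S\rrbracket(R))=\alpha(\llbracket S\rrbracket(\{\rho\}))$.
   Context: Fix a finite set $V$ of quantum variables, each a qubit with state space $\mathcal H_q\cong\mathbb C^2$; for $W\subseteq V$, $\mathcal H_W=\bigotimes_{q\in W}\mathcal H_q$. Operators and subspaces on $\mathcal H_W$ are identified with their cylindrical extensions to $\mathcal H_V$, and a subspace is identified with its orthogonal projector; $P^\perp$ is the orthocomplement. $\mathcal D(\mathcal H_V)$ is the set of partial density operators (positive, trace $\le1$). Programs: $S::=\mathbf{skip}\mid \bar q:=|0\rangle\mid \bar q\mathrel{*{=}}U\mid \mathbf{assert}\ P[\bar q]\mid S_0;S_1\mid \mathbf{if}\ P[\bar q]\ \mathbf{then}\ S_1\ \mathbf{else}\ S_0\ \mathbf{end}\mid\mathbf{while}\ P[\bar q]\ \mathbf{do}\ S\ \mathbf{end}$, with $\bar q=q_1,\dots,q_t$ distinct variables, $U$ unitary on $\mathcal H_{\bar q}$, $P$ a subspace of $\mathcal H_{\bar q}$. Semantics $\llbracket S\rrbracket:\mathcal D(\mathcal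 H_V)\to\mathcal D(\mathcal H_V)$: $\llbracket\mathbf{skip}\rrbracket(\rho)=\rho$; $\llbracket\bar q:=|0\rangle\rrbracket(\rho)=\sum_{i=0}^{2^t-1}|0\rangle_{\bar q}\langle i|\rho|i\rangle_{\bar q}\langle0|$; $\llbracket\bar q\mathrel{*{=}}U\rrbracket(\rho)=U\rho U^\dagger$; $\llbracket\mathbf{assert}\ P[\bar q]\rrbracket(\rho)=P\rho P$; $\llbracket S_0;S_1\rrbracket=\llbracket S_1\rrbracket\circ\llbracket S_0\rrbracket$; $\llbracket\mathbf{if}\ P[\bar q]\ \mathbf{then}\ S_1\ \mathbf{else}\ S_0\ \mathbf{end}\rrbracket(\rho)=\llbracket\mathbf{assert}\ P[\bar q];S_1\rrbracket(\rho)+\llbracket\mathbf{assert}\ P^\perp[\bar q];S_0\rrbracket(\rho)$; $\llbracket\mathbf{while}\ P[\bar q]\ \mathbf{do}\ S\ \mathbf{end}\rrbracket(\rho)=\sum_{i\ge0}\llbracket(\mathbf{assert}\ P[\bar q];S)^i;\mathbf{assert}\ P^\perp[\bar q]\rrbracket(\rho)$, where $T^i$ is $i$-fold sequential composition ($T^0=\mathbf{skip}$). $\mathcal Q=2^{\mathcal D(\mathcal H_V)}$ ordered by inclusion, $\llbracket S\rrbracket(R)=\{\llbracket S\rrbracket(\rho):\rho\in R\}$. A pair of monotone maps $(\alpha,\gamma)$ is a Galois connection if $c\le\gamma(a)\iff\alpha(c)\le a$, a Galois embedding if moreover $\alpha\circ\gamma=\mathrm{id}$. A complete lattice $\mathcal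 A$ with monotone $\alpha:\mathcal Q\to\mathcal A$, $\gamma:\mathcal A\to\mathcal Q$ is a well-structured abstract domain if (a) $(\alpha,\gamma)$ is a Galois embedding and (b) for any $\rho_i\in\mathcal D(\mathcal H_V)$, reals $x_i>0$ with $\sum_ix_i\rho_i\in\mathcal D(\mathcal H_V)$, $\alpha(\sum_ix_i\rho_i)=\bigvee_i\alpha(\{\rho_i\})$. *)

theory Defs
  imports Complex_Main
begin

text \<open>The set V of quantum variables is the finite type 'v. Computational basis
states of H_V are assignments 'v \<Rightarrow> bool (False = |0>, True = |1>).\<close>

type_synonym 'v bst = "'v \<Rightarrow> bool"
type_synonym 'v mat = "'v bst \<Rightarrow> 'v bst \<Rightarrow> complex"

definition mmult :: "('v::finite) mat \<Rightarrow> 'v mat \<Rightarrow> 'v mat" (infixl "**" 70) where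
  "A ** B = (\<lambda>s s'. \<Sum>t\<in>UNIV. A s t * B t s')"

definition madj :: "'v mat \<Rightarrow> 'v mat" where
  "madj A = (\<lambda>s s'. cnj (A s' s))"

definition madd :: "'v mat \<Rightarrow> 'v mat \<Rightarrow> 'v mat" where
  "madd A B = (\<lambda>s s'. A s s' + B s s')"

definition msub :: "'v mat \<Rightarrow> 'v mat \<Rightarrow> 'v mat" where
  "msub A B = (\<lambda>s s'. A s s' - B s s')"

definition mscale :: "complex \<Rightarrow> 'v mat \<Rightarrow> 'v mat" where
  "mscale c A = (\<lambda>s s'. c * A s s')"

definition mzero :: "'v mat" where
  "mzero = (\<lambda>s s'. 0)"

definition msum :: "'i set \<Rightarrow> ('i \<Rightarrow> 'v mat) \<Rightarrow> 'v mat" where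
  "msum I f = (\<lambda>s s'. \<Sum>i\<in>I. f i s s')"

definition mtrace :: "('v::finite) mat \<Rightarrow> complex" where
  "mtrace A = (\<Sum>s\<in>UNIV. A s s)"

definition positive :: "('v::finite) mat \<Rightarrow> bool" where
  "positive A \<longleftrightarrow> (\<forall>v :: 'v bst \<Rightarrow> complex.
      Im (\<Sum>s\<in>UNIV. \<Sum>s'\<in>UNIV. cnj (v s) * A s s' * v s') = 0 \<and>
      Re (\<Sum>s\<in>UNIV. \<Sum>s'\<in>UNIV. cnj (v s) * A s s' * v s') \<ge> 0)"

definition pdo :: "('v::finite) mat set" where
  "pdo = {\<rho>. positive \<rho> \<and> Re (mtrace \<rho>) \<le> 1}"

text \<open>Subsystems: basis states of H_W are assignments vanishing outside W;
restriction of an assignment to W.\<close>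
definition states :: "'v set \<Rightarrow> 'v bst set" where
  "states W = {s. \<forall>x. x \<notin> W \<longrightarrow> \<not> s x}"

definition restr :: "'v set \<Rightarrow> 'v bst \<Rightarrow> 'v bst" where
  "restr W s = (\<lambda>x. if x \<in> W then s x else False)"

text \<open>An operator on H_W is a matrix supported on states W.\<close>
definition supported :: "'v set \<Rightarrow> 'v mat \<Rightarrow> bool" where
  "supported W A \<longleftrightarrow> (\<forall>s s'. (s \<notin> states W \<or> s' \<notin> states W) \<longrightarrow> A s s' = 0)"

definition idW :: "'v set \<Rightarrow> 'v mat" where
  "idW W = (\<lambda>s s'. if s = s' \<and> s \<in> states W then 1 else 0)"

text \<open>Cylindrical extension of an operator on H_W to H_V (tensor with identity).\<close>
definition cyl :: "'v set \<Rightarrow> 'v mat \<Rightarrow> 'v mat" where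
  "cyl W A = (\<lambda>s s'. if restr (- W) s = restr (- W) s' then A (restr W s) (restr W s') else 0)"

definition unitary_on :: "('v::finite) set \<Rightarrow> 'v mat \<Rightarrow> bool" where
  "unitary_on W U \<longleftrightarrow> supported W U \<and> U ** madj U = idW W \<and> madj U ** U = idW W"

text \<open>Subspaces of H_W are identified with their orthogonal projectors.\<close>
definition projector_on :: "('v::finite) set \<Rightarrow> 'v mat \<Rightarrow> bool" where
  "projector_on W P \<longleftrightarrow> supported W P \<and> P ** P = P \<and> madj P = P"

definition orth :: "'v set \<Rightarrow> 'v mat \<Rightarrow> 'v mat" where
  "orth W P = msub (idW W) P"

definition ketbra :: "'v bst \<Rightarrow> 'v bst \<Rightarrow> 'v mat" where
  "ketbra a b = (\<lambda>s s'. if s = a \<and> s' = b then 1 else 0)"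

datatype 'v prog =
    Skip
  | Init "'v list"
  | Apply "'v list" "'v mat"
  | Assert "'v list" "'v mat"
  | Seq "'v prog" "'v prog"
  | If "'v list" "'v mat" "'v prog" "'v prog"
  | While "'v list" "'v mat" "'v prog"

fun wf_prog :: "('v::finite) prog \<Rightarrow> bool" where
  "wf_prog Skip = True"
| "wf_prog (Init qs) = distinct qs"
| "wf_prog (Apply qs U) = (distinct qs \<and> unitary_on (set qs) U)"
| "wf_prog (Assert qs P) = (distinct qs \<and> projector_on (set qs) P)"
| "wf_prog (Seq S0 S1) = (wf_prog S0 \<and> wf_prog S1)"
| "wf_prog (If qs P S1 S0) = (distinct qs \<and> projector_on (set qs) P \<and> wf_prog S1 \<and> wf_prog S0)"
| "wf_prog (While qs P S) = (distinct qs \<and> projector_on (set qs) P \<and> wf_prog S)"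

definition sem_assert :: "('v::finite) list \<Rightarrow> 'v mat \<Rightarrow> 'v mat \<Rightarrow> 'v mat" where
  "sem_assert qs P \<rho> = cyl (set qs) P ** \<rho> ** cyl (set qs) P"

definition sem_init :: "('v::finite) list \<Rightarrow> 'v mat \<Rightarrow> 'v mat" where
  "sem_init qs \<rho> = msum (states (set qs))
     (\<lambda>i. cyl (set qs) (ketbra (\<lambda>_. False) i) ** \<rho> ** madj (cyl (set qs) (ketbra (\<lambda>_. False) i)))"

primrec sem :: "('v::finite) prog \<Rightarrow> 'v mat \<Rightarrow> 'v mat" where
  "sem Skip \<rho> = \<rho>"
| "sem (Init qs) \<rho> = sem_init qs \<rho>"
| "sem (Apply qs U) \<rho> = cyl (set qs) U ** \<rho> ** madj (cyl (set qs) U)"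
| "sem (Assert qs P) \<rho> = sem_assert qs P \<rho>"
| "sem (Seq S0 S1) \<rho> = sem S1 (sem S0 \<rho>)"
| "sem (If qs P S1 S0) \<rho> =
     madd (sem S1 (sem_assert qs P \<rho>)) (sem S0 (sem_assert qs (orth (set qs) P) \<rho>))"
| "sem (While qs P S) \<rho> =
     (\<lambda>s s'. \<Sum>i. sem_assert qs (orth (set qs) P)
                   (((\<lambda>\<sigma>. sem S (sem_assert qs P \<sigma>)) ^^ i) \<rho>) s s')"

text \<open>Well-structured abstract domain: Q = 2^pdo, A a complete lattice.\<close>
definition galois_embedding :: "(('v::finite) mat set \<Rightarrow> 'a::complete_lattice) \<Rightarrow> ('a \<Rightarrow> 'v mat set) \<Rightarrow> bool" where
  "galois_embedding \<alpha> \<gamma> \<longleftrightarrow>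
     (\<forall>c1 c2. c1 \<subseteq> c2 \<and> c2 \<subseteq> pdo \<longrightarrow> \<alpha> c1 \<le> \<alpha> c2) \<and>
     (\<forall>a. \<gamma> a \<subseteq> pdo) \<and>
     mono \<gamma> \<and>
     (\<forall>c a. c \<subseteq> pdo \<longrightarrow> (c \<subseteq> \<gamma> a \<longleftrightarrow> \<alpha> c \<le> a)) \<and>
     (\<forall>a. \<alpha> (\<gamma> a) = a)"

definition well_structured :: "(('v::finite) mat set \<Rightarrow> 'a::complete_lattice) \<Rightarrow> ('a \<Rightarrow> 'v mat set) \<Rightarrow> bool" where
  "well_structured \<alpha> \<gamma> \<longleftrightarrow> galois_embedding \<alpha> \<gamma> \<and>
     (\<forall>(I::nat set) \<rho>s (x::nat \<Rightarrow> real). finite I \<and> I \<noteq> {} \<and>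
        (\<forall>i\<in>I. \<rho>s i \<in> pdo \<and> x i > 0) \<and>
        msum I (\<lambda>i. mscale (complex_of_real (x i)) (\<rho>s i)) \<in> pdo \<longrightarrow>
        \<alpha> {msum I (\<lambda>i. mscale (complex_of_real (x i)) (\<rho>s i))} = (SUP i\<in>I. \<alpha> {\<rho>s i}))"

end

theory Submission
  imports Defs
begin

text \<open>Every density operator is a mixture \<open>\<rho> = \<Sum>\<^sub>k |w\<^sub>k|\<^sup>2 |u\<^sub>k\<rangle>\<langle>u\<^sub>k|\<close> of unit vectors, indexed by
  the computational basis: a Gram factorisation \<open>\<rho> = \<Sum>\<^sub>k |a\<^sub>k\<rangle>\<langle>a\<^sub>k|\<close> is obtained by repeatedly
  splitting off the Schur complement of a diagonal entry. The program \<open>S\<^sup>\<rho>\<close> initialises all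
  qubits (giving \<open>tr(\<sigma>) |0\<rangle>\<langle>0|\<close>), rotates \<open>|0\<rangle>\<close> to \<open>\<Sum>\<^sub>k w\<^sub>k |k\<rangle>\<close>, measures in the
  computational basis and rotates outcome \<open>|k\<rangle>\<close> to \<open>|u\<^sub>k\<rangle>\<close>; the rotations are Householder
  reflections after a phase change.

  Every program denotes a positive, trace non-increasing map commuting with nonnegative
  scalars, so \<open>S\<^sup>\<rho>; S\<close> sends \<open>\<sigma>\<close> to \<open>tr(\<sigma>) \<cdot> \<lbrakk>S\<rbrakk>(\<rho>)\<close>. For a well-structured domain the
  abstraction of a set is the join of the abstractions of its elements, and the abstraction
  of a singleton is invariant under positive scaling and dominates that of \<open>{0}\<close>; hence every
  \<open>R\<close> containing a nonzero state is mapped to the abstraction of \<open>\<lbrakk>S\<rbrakk>(\<rho>)\<close>.\<close>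

section \<open>Matrices and vectors\<close>

definition mident :: "('v::finite) mat" where
  "mident = (\<lambda>s s'. if s = s' then 1 else 0)"

definition rtrace :: "('v::finite) mat \<Rightarrow> real" where
  "rtrace A = Re (mtrace A)"

lemma mmult_assoc: "((A::('v::finite) mat) ** B) ** C = A ** (B ** C)"
  unfolding mmult_def
  by (rule ext, rule ext) (simp add: sum_distrib_left sum_distrib_right mult.assoc, rule sum.swap)

lemma mtrace_mmult_commute: "mtrace ((A::('v::finite) mat) ** B) = mtrace (B ** A)"
  unfolding mtrace_def mmult_def by (subst sum.swap) (simp add: mult.commute)

lemma sum_delta_mult_left [simp]:
  "(\<Sum>t\<in>UNIV. (if s = t then 1 else 0) * f t) = (f (s::('v::finite) bst) :: complex)"
  by (simp add: if_distrib[where f = "\<lambda>x. x * _"] cong: if_cong)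

lemma sum_delta_mult_right [simp]:
  "(\<Sum>t\<in>UNIV. f t * (if t = s then 1 else 0)) = (f (s::('v::finite) bst) :: complex)"
  by (simp add: if_distrib[where f = "\<lambda>x. _ * x"] cong: if_cong)

lemma mident_mmult [simp]: "mident ** (A::('v::finite) mat) = A"
  unfolding mident_def mmult_def by (rule ext, rule ext) simp

lemma mmult_mident [simp]: "(A::('v::finite) mat) ** mident = A"
  unfolding mident_def mmult_def by (rule ext, rule ext) simp

lemma madj_mident [simp]: "madj mident = mident"
  unfolding mident_def madj_def by (rule ext, rule ext) auto

lemma mmult_msub_left: "msub A B ** (C::('v::finite) mat) = msub (A ** C) (B ** C)"
  unfolding msub_def mmult_def by (simp add: left_diff_distrib sum_subtractf)

lemma mmult_msub_right: "(C::('v::finite) mat) ** msub A B = msub (C ** A) (C ** B)"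
  unfolding msub_def mmult_def by (simp add: right_diff_distrib sum_subtractf)

lemma mmult_mscale_left: "mscale c A ** (C::('v::finite) mat) = mscale c (A ** C)"
  unfolding mscale_def mmult_def by (simp add: sum_distrib_left mult.assoc)

lemma mmult_mscale_right: "(C::('v::finite) mat) ** mscale c A = mscale c (C ** A)"
  unfolding mscale_def mmult_def by (simp add: sum_distrib_left mult.assoc mult.left_commute)

lemma mmult_mscale_conj: "(M::('v::finite) mat) ** mscale c A ** N = mscale c (M ** A ** N)"
  by (simp add: mmult_mscale_left mmult_mscale_right)

lemma msum_mmult_left: "msum I f ** (C::('v::finite) mat) = msum I (\<lambda>i. f i ** C)"
  unfolding msum_def mmult_def by (intro ext) (simp add: sum_distrib_right, rule sum.swap)

lemma madj_msub: "madj (msub A B) = msub (madj A) (madj B)"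
  unfolding madj_def msub_def by auto

lemma madj_mscale: "madj (mscale c A) = mscale (cnj c) (madj A)"
  unfolding madj_def mscale_def by (intro ext) simp

lemma msum_cong: "(\<And>i. i \<in> I \<Longrightarrow> f i = g i) \<Longrightarrow> msum I f = msum I g"
  unfolding msum_def by (intro ext sum.cong) auto

lemma msum_mscale: "msum I (\<lambda>i. mscale c (f i)) = mscale c (msum I f)"
  unfolding msum_def mscale_def by (intro ext) (simp add: sum_distrib_left)

lemma madd_mscale: "madd (mscale c A) (mscale c B) = mscale c (madd A B)"
  unfolding madd_def mscale_def by (intro ext) (simp add: distrib_left)

lemma mtrace_msub: "mtrace (msub A (B::('v::finite) mat)) = mtrace A - mtrace B"
  unfolding mtrace_def msub_def by (simp add: sum_subtractf)

lemma mtrace_mscale: "mtrace (mscale c (B::('v::finite) mat)) = c * mtrace B"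
  unfolding mtrace_def mscale_def by (simp add: sum_distrib_left)

lemma mtrace_msum: "mtrace (msum I f) = (\<Sum>i\<in>I. mtrace ((f i)::('v::finite) mat))"
  unfolding mtrace_def msum_def by (rule sum.swap)

lemma mtrace_conj: "mtrace ((M::('v::finite) mat) ** A ** madj M) = mtrace (madj M ** M ** A)"
  by (metis mmult_assoc mtrace_mmult_commute)

lemma rtrace_madd: "rtrace (madd A (B::('v::finite) mat)) = rtrace A + rtrace B"
  unfolding rtrace_def mtrace_def madd_def by (simp add: sum.distrib)

lemma rtrace_mscale: "rtrace (mscale (complex_of_real t) (A::('v::finite) mat)) = t * rtrace A"
  unfolding rtrace_def by (simp add: mtrace_mscale)

definition mvmult :: "('v::finite) mat \<Rightarrow> ('v bst \<Rightarrow> complex) \<Rightarrow> ('v bst \<Rightarrow> complex)" where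
  "mvmult M v = (\<lambda>s. \<Sum>t\<in>UNIV. M s t * v t)"

definition vinner :: "('v::finite bst \<Rightarrow> complex) \<Rightarrow> ('v bst \<Rightarrow> complex) \<Rightarrow> complex" where
  "vinner u x = (\<Sum>s\<in>UNIV. cnj (u s) * x s)"

definition sesq :: "('v::finite) mat \<Rightarrow> ('v bst \<Rightarrow> complex) \<Rightarrow> ('v bst \<Rightarrow> complex) \<Rightarrow> complex" where
  "sesq A u v = (\<Sum>s\<in>UNIV. \<Sum>s'\<in>UNIV. cnj (u s) * A s s' * v s')"

definition outer :: "('v::finite bst \<Rightarrow> complex) \<Rightarrow> ('v bst \<Rightarrow> complex) \<Rightarrow> 'v mat" where
  "outer x y = (\<lambda>s s'. x s * cnj (y s'))"

definition ket :: "'v bst \<Rightarrow> 'v bst \<Rightarrow> complex" where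
  "ket k = (\<lambda>x. if x = k then 1 else 0)"

lemma sesq_eq_vinner: "sesq A u v = vinner u (mvmult A v)"
  unfolding sesq_def vinner_def mvmult_def by (simp add: sum_distrib_left mult.assoc)

lemma mvmult_mmult: "mvmult ((A::('v::finite) mat) ** B) v = mvmult A (mvmult B v)"
  unfolding mvmult_def mmult_def
  by (rule ext) (simp add: sum_distrib_left sum_distrib_right mult.assoc, rule sum.swap)

lemma mvmult_ket: "mvmult A (ket k) = (\<lambda>s. A s (k::('v::finite) bst))"
  unfolding mvmult_def ket_def by (rule ext) simp

lemma vinner_mvmult: "vinner u (mvmult M x) = vinner (mvmult (madj M) u) x"
  unfolding vinner_def mvmult_def madj_def
  by (simp add: sum_distrib_left sum_distrib_right mult.assoc mult.left_commute, rule sum.swap)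

lemma vinner_commute: "vinner v c = cnj (vinner c v)"
  unfolding vinner_def by (simp add: mult.commute)

lemma vinner_diff_left: "vinner (\<lambda>x. v x - d x) y = vinner v y - vinner d y"
  unfolding vinner_def by (simp add: left_diff_distrib sum_subtractf)

lemma vinner_diff_right: "vinner v (\<lambda>x. y x - z x) = vinner v y - vinner v z"
  unfolding vinner_def by (simp add: right_diff_distrib sum_subtractf)

lemma vinner_scale_left: "vinner (\<lambda>x. c * v x) y = cnj c * vinner v y"
  unfolding vinner_def by (simp add: sum_distrib_left mult.assoc)

lemma vinner_scale_right: "vinner v (\<lambda>x. c * y x) = c * vinner v y"
  unfolding vinner_def by (simp add: sum_distrib_left mult.left_commute)

lemma vinner_ket_left: "vinner (ket k) y = y (k::('v::finite) bst)"
  unfolding vinner_def ket_def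
  by (simp add: if_distrib[where f = cnj] if_distrib[where f = "\<lambda>x. x * _"] cong: if_cong)

lemma vinner_ket_ket [simp]: "vinner (ket k) (ket (k::('v::finite) bst)) = 1"
  unfolding vinner_ket_left by (simp add: ket_def)

lemma vinner_self: "vinner v v = complex_of_real (\<Sum>s\<in>UNIV. (cmod (v s))\<^sup>2)"
proof -
  have "cnj (v s) * v s = complex_of_real ((cmod (v s))\<^sup>2)" for s
    by (metis complex_norm_square mult.commute)
  then show ?thesis unfolding vinner_def of_real_sum by simp
qed

lemma vinner_self_eq_0:
  fixes v :: "('v::finite) bst \<Rightarrow> complex"
  assumes "vinner v v = 0" shows "v = (\<lambda>_. 0)"
proof -
  have "(\<Sum>s\<in>UNIV. (cmod (v s))\<^sup>2) = 0" using assms vinner_self[of v] by (metis of_real_eq_0_iff)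
  then have "\<forall>s\<in>UNIV. (cmod (v s))\<^sup>2 = 0" by (subst sum_nonneg_eq_0_iff[symmetric]) auto
  then show ?thesis by (intro ext) simp
qed

lemma madj_outer: "madj (outer x y) = outer y x"
  unfolding madj_def outer_def by (intro ext) simp

lemma outer_ket: "outer (ket a) (ket a) = ketbra a a"
  unfolding ketbra_def outer_def ket_def by (intro ext) simp

lemma mtrace_outer: "mtrace (outer x y) = vinner y (x::('v::finite) bst \<Rightarrow> complex)"
  unfolding mtrace_def outer_def vinner_def by (simp add: mult.commute)

lemma outer_conj: "(M::('v::finite) mat) ** outer x y ** madj N = outer (mvmult M x) (mvmult N y)"
  unfolding outer_def mmult_def madj_def mvmult_def
  by (intro ext) (simp add: sum_distrib_left sum_distrib_right mult.assoc mult.commute mult.left_commute)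

lemma outer_outer: "outer w w ** outer w w = mscale (vinner w w) (outer (w::('v::finite) bst \<Rightarrow> complex) w)"
  unfolding outer_def mmult_def mscale_def vinner_def
  by (intro ext) (simp add: sum_distrib_left sum_distrib_right mult.assoc mult.left_commute)

lemma sesq_outer: "sesq (outer c c) v v = cnj (vinner c v) * vinner c v"
proof -
  have mv: "mvmult (outer c c) v = (\<lambda>s. vinner c v * c s)"
    unfolding mvmult_def outer_def vinner_def by (rule ext) (simp add: ac_simps flip: sum_distrib_left)
  show ?thesis
    unfolding sesq_eq_vinner mv vinner_scale_right vinner_commute[of v c] by (rule mult.commute)
qed

section \<open>Positive operators\<close>

lemma positive_iff_sesq: "positive A \<longleftrightarrow> (\<forall>v. Im (sesq A v v) = 0 \<and> Re (sesq A v v) \<ge> 0)"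
  by (simp add: positive_def sesq_def)

lemma positiveD: "positive A \<Longrightarrow> Im (sesq A v v) = 0 \<and> Re (sesq A v v) \<ge> 0"
  unfolding positive_iff_sesq by blast

lemma positive_conj: "positive A \<Longrightarrow> positive (M ** A ** madj M)"
proof -
  have "sesq (M ** A ** madj M) v v = sesq A (mvmult (madj M) v) (mvmult (madj M) v)" for v
    by (simp add: sesq_eq_vinner mvmult_mmult vinner_mvmult)
  then show "positive A \<Longrightarrow> positive (M ** A ** madj M)"
    unfolding positive_iff_sesq by metis
qed

lemma positive_madd: "positive A \<Longrightarrow> positive B \<Longrightarrow> positive (madd A B)"
proof -
  have "sesq (madd A B) v v = sesq A v v + sesq B v v" for v
    unfolding sesq_def madd_def by (simp add: distrib_left distrib_right sum.distrib)
  then show "positive A \<Longrightarrow> positive B \<Longrightarrow> positive (madd A B)"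
    unfolding positive_iff_sesq by simp
qed

lemma positive_mscale: "positive A \<Longrightarrow> c \<ge> 0 \<Longrightarrow> positive (mscale (complex_of_real c) A)"
proof -
  have "sesq (mscale (complex_of_real c) A) v v = complex_of_real c * sesq A v v" for v
    unfolding sesq_def mscale_def by (simp add: sum_distrib_left mult.assoc mult.left_commute)
  then show "positive A \<Longrightarrow> c \<ge> 0 \<Longrightarrow> ?thesis"
    unfolding positive_iff_sesq by simp
qed

lemma positive_mzero: "positive mzero"
  unfolding positive_def mzero_def by simp

lemma positive_msum: "finite I \<Longrightarrow> (\<And>i. i \<in> I \<Longrightarrow> positive (f i)) \<Longrightarrow> positive (msum I f)"
proof (induction I rule: finite_induct)
  case empty
  then show ?case unfolding positive_def msum_def by simp
next
  case (insert x F)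
  have "msum (insert x F) f = madd (f x) (msum F f)"
    unfolding msum_def madd_def using insert by (simp add: sum.insert)
  then show ?case using insert positive_madd by auto
qed

lemma sesq_two_point:
  fixes A :: "('v::finite) mat"
  shows "sesq A (\<lambda>x. (if x = s then a else 0) + (if x = t then b else 0))
                (\<lambda>x. (if x = s then a else 0) + (if x = t then b else 0))
    = cnj a * a * A s s + cnj a * b * A s t + cnj b * a * A t s + cnj b * b * A t t"
proof -
  define v where "v = (\<lambda>x. (if x = s then a else 0) + (if x = t then b else 0))"
  have mv: "mvmult A v = (\<lambda>y. A y s * a + A y t * b)"
    unfolding mvmult_def v_def by (rule ext) (simp add: distrib_left sum.distrib if_distrib[where f = "\<lambda>x. _ * x"] cong: if_cong)
  have "vinner v y = cnj a * y s + cnj b * y t" for y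
    unfolding vinner_def v_def by (simp add: distrib_right sum.distrib if_distrib[where f = cnj] if_distrib[where f = "\<lambda>x. x * _"] cong: if_cong)
  then show ?thesis unfolding v_def[symmetric] sesq_eq_vinner mv by (simp add: algebra_simps)
qed

lemma positive_diag:
  fixes A :: "('v::finite) mat"
  assumes "positive A" shows "Im (A s s) = 0" "Re (A s s) \<ge> 0"
proof -
  have "sesq A (\<lambda>x. (if x = s then 1 else 0) + (if x = s then 0 else 0))
                (\<lambda>x. (if x = s then 1 else 0) + (if x = s then 0 else 0)) = A s s"
    by (subst sesq_two_point) simp
  then show "Im (A s s) = 0" "Re (A s s) \<ge> 0" using positiveD[OF assms] by metis+
qed

lemma positive_diag_of_real:
  fixes A :: "('v::finite) mat"
  assumes "positive A" shows "A s s = of_real (Re (A s s))"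
  using positive_diag[OF assms, of s] by (simp add: complex_eq_iff)

lemma positive_hermitian:
  fixes A :: "('v::finite) mat"
  assumes "positive A" shows "A t s = cnj (A s t)"
proof -
  have "Im (A s s + A s t + A t s + A t t) = 0"
    using positiveD[OF assms, of "\<lambda>x. (if x = s then 1 else 0) + (if x = t then 1 else 0)"]
    by (subst (asm) sesq_two_point) simp
  then have im: "Im (A s t) + Im (A t s) = 0" using positive_diag[OF assms] by simp
  have "Im (A s s + \<i> * A s t - \<i> * A t s + A t t) = 0"
    using positiveD[OF assms, of "\<lambda>x. (if x = s then 1 else 0) + (if x = t then \<i> else 0)"]
    by (subst (asm) sesq_two_point) simp
  then have re: "Re (A s t) - Re (A t s) = 0" using positive_diag[OF assms] by simp
  show ?thesis using im re by (simp add: complex_eq_iff)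
qed

text \<open>Testing positivity on \<open>r |s\<rangle> + \<beta> |t\<rangle>\<close> with the phase \<open>\<beta>\<close> chosen against \<open>A s t\<close>.\<close>
lemma positive_entry_quadratic:
  fixes A :: "('v::finite) mat"
  assumes "positive A" "r \<ge> 0"
  shows "r\<^sup>2 * Re (A s s) - 2 * r * cmod (A s t) + Re (A t t) \<ge> 0"
proof (cases "A s t = 0")
  case True
  then show ?thesis using positive_diag[OF assms(1)] assms(2) by simp
next
  case False
  define x where "x = A s t"
  define b where "b = - (cnj x / complex_of_real (cmod x))"
  have xn: "cmod x > 0" using False x_def by simp
  have sq: "y * cnj y = complex_of_real (cmod y) * complex_of_real (cmod y)" for y
    by (metis complex_norm_square of_real_mult power2_eq_square)
  have bx: "b * x = - complex_of_real (cmod x)" and bb: "cnj b * b = 1"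
    unfolding b_def using xn by (simp_all add: field_simps sq)
  have cbx: "cnj b * cnj x = - complex_of_real (cmod x)"
    using arg_cong[OF bx, of cnj] by simp
  have herm: "A t s = cnj x" unfolding x_def by (rule positive_hermitian[OF assms(1)])
  define v where "v = (\<lambda>y. (if y = s then of_real r else 0) + (if y = t then b else 0))"
  have "sesq A v v
     = of_real (r\<^sup>2) * A s s + of_real r * (b * x) + of_real r * (cnj b * cnj x) + (cnj b * b) * A t t"
    unfolding v_def by (subst sesq_two_point) (simp add: herm x_def[symmetric] algebra_simps power2_eq_square)
  also have "\<dots> = of_real (r\<^sup>2 * Re (A s s) - 2 * r * cmod x + Re (A t t))"
    using bx cbx bb positive_diag_of_real[OF assms(1), of s] positive_diag_of_real[OF assms(1), of t]
    by (simp add: complex_eq_iff)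
  finally show ?thesis using positiveD[OF assms(1), of v] unfolding x_def by simp
qed

lemma positive_entry_bound:
  fixes A :: "('v::finite) mat"
  assumes "positive A" shows "2 * cmod (A s t) \<le> Re (A s s) + Re (A t t)"
  using positive_entry_quadratic[OF assms, of 1 s t] by simp

lemma positive_zero_diag_row:
  fixes A :: "('v::finite) mat"
  assumes "positive A" "A k k = 0" shows "A k j = 0"
proof (rule ccontr)
  assume "A k j \<noteq> 0"
  then have c: "cmod (A k j) > 0" by simp
  define r where "r = (Re (A j j) + 1) / (2 * cmod (A k j))"
  have "r \<ge> 0" using positive_diag[OF assms(1), of j] c r_def by simp
  then have "r\<^sup>2 * Re (A k k) - 2 * r * cmod (A k j) + Re (A j j) \<ge> 0"
    by (rule positive_entry_quadratic[OF assms(1)])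
  moreover have "2 * r * cmod (A k j) = Re (A j j) + 1" using c r_def by (simp add: field_simps)
  ultimately show False using assms(2) by simp
qed

lemma rtrace_nonneg:
  fixes A :: "('v::finite) mat"
  assumes "positive A" shows "rtrace A \<ge> 0"
  unfolding rtrace_def mtrace_def using positive_diag(2)[OF assms] by (simp add: sum_nonneg)

lemma mtrace_of_real_rtrace:
  fixes A :: "('v::finite) mat"
  assumes "positive A" shows "mtrace A = complex_of_real (rtrace A)"
  unfolding rtrace_def mtrace_def using positive_diag(1)[OF assms] by (simp add: complex_eq_iff)

lemma positive_entry_le_rtrace:
  fixes A :: "('v::finite) mat"
  assumes "positive A" shows "cmod (A s t) \<le> rtrace A"
proof -
  have diag_le: "(\<Sum>x\<in>D. Re (A x x)) \<le> rtrace A" for D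
    unfolding rtrace_def mtrace_def Re_sum by (rule sum_mono2) (use positive_diag[OF assms] in auto)
  show ?thesis
  proof (cases "s = t")
    case True
    then show ?thesis
      using diag_le[of "{s}"] positive_diag[OF assms, of s] by (simp add: cmod_eq_Re)
  next
    case False
    then show ?thesis
      using diag_le[of "{s, t}"] positive_entry_bound[OF assms, of s t]
        positive_diag(2)[OF assms, of s] positive_diag(2)[OF assms, of t] by simp
  qed
qed

lemma positive_rtrace_eq_0:
  fixes A :: "('v::finite) mat"
  assumes "positive A" "rtrace A = 0" shows "A = mzero"
proof -
  have "\<forall>x\<in>UNIV. Re (A x x) = 0"
    using assms(2) unfolding rtrace_def mtrace_def
    by (subst sum_nonneg_eq_0_iff[symmetric]) (use positive_diag[OF assms(1)] in auto)
  then have "A x x = 0" for x using positive_diag[OF assms(1), of x] by (simp add: complex_eq_iff)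
  then show ?thesis unfolding mzero_def using positive_zero_diag_row[OF assms(1)] by (intro ext) blast
qed

section \<open>Cylindrical extensions\<close>

lemma restr_in_states [simp]: "restr W s \<in> states W"
  unfolding restr_def states_def by auto

lemma sum_fiber_restr:
  fixes f :: "('v::finite) bst \<Rightarrow> complex"
  shows "(\<Sum>t\<in>UNIV. if restr (-W) t = restr (-W) s then f (restr W t) else 0) = (\<Sum>u\<in>states W. f u)"
proof -
  have "(\<Sum>t\<in>UNIV. if restr (-W) t = restr (-W) s then f (restr W t) else 0)
      = (\<Sum>t\<in>{t. restr (-W) t = restr (-W) s}. f (restr W t))"
    by (simp add: sum.inter_filter[symmetric])
  also have "\<dots> = (\<Sum>u\<in>states W. f u)"
  proof (rule sum.reindex_bij_betw)
    show "bij_betw (restr W) {t. restr (- W) t = restr (- W) s} (states W)"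
    proof (rule bij_betw_byWitness[where f'="\<lambda>u x. if x \<in> W then u x else s x"])
      show "restr W ` {t. restr (- W) t = restr (- W) s} \<subseteq> states W" by auto
      show "(\<lambda>u x. if x \<in> W then u x else s x) ` states W \<subseteq> {t. restr (- W) t = restr (- W) s}"
        unfolding restr_def by (auto intro!: ext)
      show "\<forall>x\<in>{t. restr (- W) t = restr (- W) s}. (\<lambda>xa. if xa \<in> W then restr W x xa else s xa) = x"
        unfolding restr_def by (auto intro!: ext dest: fun_cong)
      show "\<forall>y\<in>states W. restr W (\<lambda>x. if x \<in> W then y x else s x) = y"
        unfolding restr_def states_def by (auto intro!: ext)
    qed
  qed
  finally show ?thesis .
qed

lemma cyl_mmult:
  fixes A B :: "('v::finite) mat"
  assumes "supported W A"
  shows "cyl W A ** cyl W B = cyl W (A ** B)"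
proof (rule ext, rule ext)
  fix s s'
  show "(cyl W A ** cyl W B) s s' = cyl W (A ** B) s s'"
  proof (cases "restr (-W) s = restr (-W) s'")
    case False
    then show ?thesis unfolding cyl_def mmult_def by (auto intro!: sum.neutral)
  next
    case True
    have "(cyl W A ** cyl W B) s s' = (\<Sum>t\<in>UNIV. if restr (-W) t = restr (-W) s
            then A (restr W s) (restr W t) * B (restr W t) (restr W s') else 0)"
      unfolding cyl_def mmult_def using True by (intro sum.cong) auto
    also have "\<dots> = (\<Sum>u\<in>states W. A (restr W s) u * B u (restr W s'))"
      by (rule sum_fiber_restr)
    also have "\<dots> = (\<Sum>u\<in>UNIV. A (restr W s) u * B u (restr W s'))"
      using assms by (intro sum.mono_neutral_left) (auto simp: supported_def)
    finally show ?thesis unfolding cyl_def mmult_def using True by simp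
  qed
qed

lemma madj_cyl: "madj (cyl W A) = cyl W (madj A)"
  unfolding madj_def cyl_def by (intro ext) auto

lemma cyl_idW: "cyl W (idW W) = (mident :: ('v::finite) mat)"
proof (intro ext)
  fix s s' :: "'v bst"
  have "(restr (-W) s = restr (-W) s' \<and> restr W s = restr W s') \<longleftrightarrow> s = s'"
    unfolding restr_def by (auto simp: fun_eq_iff)
  then show "cyl W (idW W) s s' = mident s s'"
    unfolding cyl_def idW_def mident_def by auto
qed

lemma cyl_msub: "cyl W (msub A B) = msub (cyl W A) (cyl W B)"
  unfolding cyl_def msub_def by (intro ext) auto

lemma cyl_msum: "cyl W (msum I f) = msum I (\<lambda>i. cyl W (f i))"
  unfolding cyl_def msum_def by (intro ext) auto

lemma cyl_UNIV: "cyl UNIV A = A"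
  unfolding cyl_def restr_def by simp

lemma states_UNIV: "states UNIV = UNIV"
  unfolding states_def by simp

lemma idW_UNIV: "idW UNIV = (mident :: ('v::finite) mat)"
  unfolding idW_def mident_def states_def by (intro ext) simp

lemma supported_madj: "supported W A \<Longrightarrow> supported W (madj A)"
  unfolding supported_def madj_def by auto

lemma supported_ketbra: "a \<in> states W \<Longrightarrow> b \<in> states W \<Longrightarrow> supported W (ketbra a b)"
  unfolding supported_def ketbra_def by auto

lemma ketbra_mmult_ketbra: "ketbra a b ** ketbra (b::('v::finite) bst) c = ketbra a c"
  unfolding ketbra_def mmult_def by (intro ext) (simp add: if_distrib[where f="\<lambda>x. x * _"] cong: if_cong)

lemma madj_ketbra: "madj (ketbra a b) = ketbra b a"
  unfolding ketbra_def madj_def by (intro ext) auto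

lemma msum_ketbra_states: "msum (states W) (\<lambda>i. ketbra i i) = (idW W :: ('v::finite) mat)"
proof (intro ext)
  fix s s' :: "'v bst"
  have "(\<Sum>i\<in>states W. if s = i \<and> s' = i then (1::complex) else 0) = (if s = s' \<and> s \<in> states W then 1 else 0)"
    by (cases "s = s'") (simp, intro trans[OF sum.neutral], auto)
  then show "msum (states W) (\<lambda>i. ketbra i i) s s' = idW W s s'"
    unfolding msum_def ketbra_def idW_def by simp
qed

lemma unitary_on_UNIV:
  "(H::('v::finite) mat) ** madj H = mident \<Longrightarrow> madj H ** H = mident \<Longrightarrow> unitary_on UNIV H"
  unfolding unitary_on_def supported_def states_def idW_UNIV by simp

lemma projector_on_ketbra: "projector_on UNIV (ketbra k (k::('v::finite) bst))"
  unfolding projector_on_def supported_def states_UNIV by (simp add: ketbra_mmult_ketbra madj_ketbra)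

section \<open>Programs denote quantum operations\<close>

text \<open>Positivity, trace non-increase and homogeneity for nonnegative scalars on positive
  operators: all the abstraction argument needs to know about program semantics.\<close>
definition quantum_op :: "(('v::finite) mat \<Rightarrow> 'v mat) \<Rightarrow> bool" where
  "quantum_op F \<longleftrightarrow> (\<forall>\<sigma>. positive \<sigma> \<longrightarrow> positive (F \<sigma>) \<and> rtrace (F \<sigma>) \<le> rtrace \<sigma> \<and>
      (\<forall>c\<ge>0. F (mscale (of_real c) \<sigma>) = mscale (of_real c) (F \<sigma>)))"

lemma quantum_opI:
  assumes "\<And>\<sigma>. positive \<sigma> \<Longrightarrow> positive (F \<sigma>)"
    and "\<And>\<sigma>. positive \<sigma> \<Longrightarrow> rtrace (F \<sigma>) \<le> rtrace \<sigma>"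
    and "\<And>\<sigma> c. positive \<sigma> \<Longrightarrow> c \<ge> 0 \<Longrightarrow> F (mscale (of_real c) \<sigma>) = mscale (of_real c) (F \<sigma>)"
  shows "quantum_op F"
  using assms unfolding quantum_op_def by blast

lemma quantum_opD:
  assumes "quantum_op F" "positive \<sigma>"
  shows "positive (F \<sigma>)" "rtrace (F \<sigma>) \<le> rtrace \<sigma>"
    "c \<ge> 0 \<Longrightarrow> F (mscale (of_real c) \<sigma>) = mscale (of_real c) (F \<sigma>)"
  using assms unfolding quantum_op_def by blast+

lemma quantum_op_comp: "quantum_op F \<Longrightarrow> quantum_op G \<Longrightarrow> quantum_op (G \<circ> F)"
  unfolding quantum_op_def by (auto intro: order_trans)

lemma quantum_op_conj_unitary:
  fixes U :: "('v::finite) mat"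
  assumes "madj U ** U = mident"
  shows "quantum_op (\<lambda>\<sigma>. U ** \<sigma> ** madj U)"
  by (rule quantum_opI)
    (simp_all add: positive_conj rtrace_def mtrace_conj assms mmult_mscale_conj)

lemma sem_assert_mscale: "sem_assert qs P (mscale c \<sigma>) = mscale c (sem_assert qs P \<sigma>)"
  unfolding sem_assert_def by (rule mmult_mscale_conj)

lemma rtrace_projection_split:
  fixes Q :: "('v::finite) mat"
  assumes "Q ** Q = Q"
  shows "rtrace (Q ** \<rho> ** Q) + rtrace (msub mident Q ** \<rho> ** msub mident Q) = rtrace \<rho>"
proof -
  have "msub mident Q ** msub mident Q = msub (msub mident Q) (msub Q (Q ** Q))"
    by (simp add: mmult_msub_left mmult_msub_right)
  then have idem: "msub mident Q ** msub mident Q = msub mident Q"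
    using assms unfolding msub_def by simp
  have "mtrace (P ** \<rho> ** P) = mtrace (P ** \<rho>)" if "P ** P = P" for P :: "'v mat"
    by (metis that mmult_assoc mtrace_mmult_commute)
  then have "mtrace (Q ** \<rho> ** Q) + mtrace (msub mident Q ** \<rho> ** msub mident Q) = mtrace (Q ** \<rho>) + mtrace (msub mident Q ** \<rho>)"
    using assms idem by simp
  also have "\<dots> = mtrace \<rho>" by (simp add: mmult_msub_left mtrace_msub)
  finally show ?thesis unfolding rtrace_def by (metis plus_complex.sel(1))
qed

lemma sem_assert_split:
  fixes P :: "('v::finite) mat"
  assumes "projector_on (set qs) P" "positive \<rho>"
  shows "positive (sem_assert qs P \<rho>)" "positive (sem_assert qs (orth (set qs) P) \<rho>)"
    "rtrace (sem_assert qs P \<rho>) + rtrace (sem_assert qs (orth (set qs) P) \<rho>) = rtrace \<rho>"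
proof -
  let ?Q = "cyl (set qs) P"
  have Q: "madj ?Q = ?Q" "?Q ** ?Q = ?Q" "cyl (set qs) (orth (set qs) P) = msub mident ?Q"
    using assms(1) unfolding projector_on_def
    by (simp_all add: madj_cyl cyl_mmult orth_def cyl_msub cyl_idW)
  have "madj (msub mident ?Q) = msub mident ?Q" using Q(1) by (simp add: madj_msub)
  then show "positive (sem_assert qs P \<rho>)" "positive (sem_assert qs (orth (set qs) P) \<rho>)"
    unfolding sem_assert_def using Q positive_conj[OF assms(2)] by metis+
  show "rtrace (sem_assert qs P \<rho>) + rtrace (sem_assert qs (orth (set qs) P) \<rho>) = rtrace \<rho>"
    unfolding sem_assert_def Q(3) by (rule rtrace_projection_split[OF Q(2)])
qed

lemma quantum_op_apply:
  fixes U :: "('v::finite) mat"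
  assumes "unitary_on W U"
  shows "quantum_op (\<lambda>\<sigma>. cyl W U ** \<sigma> ** madj (cyl W U))"
  using assms unfolding unitary_on_def
  by (intro quantum_op_conj_unitary) (simp add: madj_cyl cyl_mmult supported_madj cyl_idW)

lemma init_kraus_complete:
  fixes W :: "('v::finite) set"
  shows "msum (states W) (\<lambda>i. madj (cyl W (ketbra (\<lambda>_. False) i)) ** cyl W (ketbra (\<lambda>_. False) i)) = mident"
proof -
  have "(\<lambda>_. False) \<in> states W" unfolding states_def by simp
  then have "msum (states W) (\<lambda>i. madj (cyl W (ketbra (\<lambda>_. False) i)) ** cyl W (ketbra (\<lambda>_. False) i))
      = msum (states W) (\<lambda>i. cyl W (ketbra i i))"
    by (intro msum_cong) (simp add: madj_cyl madj_ketbra cyl_mmult supported_ketbra ketbra_mmult_ketbra)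
  also have "\<dots> = mident" by (simp add: cyl_msum[symmetric] msum_ketbra_states cyl_idW)
  finally show ?thesis .
qed

lemma quantum_op_init: "quantum_op (sem_init (qs :: ('v::finite) list))"
proof (rule quantum_opI)
  fix \<rho> :: "'v mat"
  assume \<rho>: "positive \<rho>"
  show "positive (sem_init qs \<rho>)" unfolding sem_init_def
    by (rule positive_msum) (auto intro: positive_conj[OF \<rho>])
  let ?K = "\<lambda>i. cyl (set qs) (ketbra (\<lambda>_. False) i)"
  have "mtrace (sem_init qs \<rho>) = mtrace (msum (states (set qs)) (\<lambda>i. madj (?K i) ** ?K i) ** \<rho>)"
    unfolding sem_init_def mtrace_msum msum_mmult_left by (simp add: mtrace_conj)
  then show "rtrace (sem_init qs \<rho>) \<le> rtrace \<rho>" unfolding rtrace_def init_kraus_complete by simp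
  show "sem_init qs (mscale (of_real c) \<rho>) = mscale (of_real c) (sem_init qs \<rho>)" for c
    unfolding sem_init_def by (simp add: mmult_mscale_conj msum_mscale)
qed

lemma summable_entries_of_bounded_rtrace:
  fixes E :: "nat \<Rightarrow> ('v::finite) mat"
  assumes pos: "\<And>i. positive (E i)" and bnd: "\<And>n. (\<Sum>i<n. rtrace (E i)) \<le> b"
  shows "summable (\<lambda>i. rtrace (E i))" "summable (\<lambda>i. E i s s')"
proof -
  show tr: "summable (\<lambda>i. rtrace (E i))"
    by (rule summableI_nonneg_bounded[where x = b]) (use rtrace_nonneg[OF pos] bnd in auto)
  show "summable (\<lambda>i. E i s s')"
    by (rule summable_comparison_test'[OF tr]) (use positive_entry_le_rtrace[OF pos] in auto)
qed

lemma positive_entrywise_suminf: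
  fixes E :: "nat \<Rightarrow> ('v::finite) mat"
  assumes pos: "\<And>i. positive (E i)" and bnd: "\<And>n. (\<Sum>i<n. rtrace (E i)) \<le> b"
  shows "positive (\<lambda>s s'. \<Sum>i. E i s s')" "rtrace (\<lambda>s s'. \<Sum>i. E i s s') \<le> b"
proof -
  note sument = summable_entries_of_bounded_rtrace(2)[OF assms]
  have sumsesq: "summable (\<lambda>i. sesq (E i) v v)" for v
    unfolding sesq_def by (auto intro!: summable_sum summable_mult2 summable_mult sument)
  have sesq_suminf: "sesq (\<lambda>s s'. \<Sum>i. E i s s') v v = (\<Sum>i. sesq (E i) v v)" for v
  proof -
    have "cnj (v s) * (\<Sum>i. E i s s') * v s' = (\<Sum>i. cnj (v s) * E i s s' * v s')" for s s'
    proof -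
      have "cnj (v s) * (\<Sum>i. E i s s') * v s' = (\<Sum>i. cnj (v s) * E i s s') * v s'"
        using suminf_mult[OF sument] by simp
      also have "\<dots> = (\<Sum>i. cnj (v s) * E i s s' * v s')"
        by (rule suminf_mult2[OF summable_mult[OF sument]])
      finally show ?thesis .
    qed
    then have "sesq (\<lambda>s s'. \<Sum>i. E i s s') v v = (\<Sum>s\<in>UNIV. \<Sum>s'\<in>UNIV. \<Sum>i. cnj (v s) * E i s s' * v s')"
      unfolding sesq_def by simp
    also have "\<dots> = (\<Sum>i. \<Sum>s\<in>UNIV. \<Sum>s'\<in>UNIV. cnj (v s) * E i s s' * v s')"
      by (simp add: suminf_sum summable_sum summable_mult2 summable_mult sument)
    finally show ?thesis unfolding sesq_def .
  qed
  show "positive (\<lambda>s s'. \<Sum>i. E i s s')" unfolding positive_iff_sesq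
  proof
    fix v
    have "Im (sesq (E i) v v) = 0" "Re (sesq (E i) v v) \<ge> 0" for i using positiveD[OF pos] by blast+
    then show "Im (sesq (\<lambda>s s'. \<Sum>i. E i s s') v v) = 0 \<and> 0 \<le> Re (sesq (\<lambda>s s'. \<Sum>i. E i s s') v v)"
      unfolding sesq_suminf Im_suminf[OF sumsesq] Re_suminf[OF sumsesq]
      by (simp add: suminf_nonneg summable_Re[OF sumsesq])
  qed
  have "rtrace (\<lambda>s s'. \<Sum>i. E i s s') = (\<Sum>i. rtrace (E i))"
    unfolding rtrace_def mtrace_def
    by (simp add: suminf_sum[symmetric] sument Re_suminf summable_sum)
  also have "\<dots> \<le> b"
    by (rule suminf_le_const[OF summable_entries_of_bounded_rtrace(1)[OF assms] bnd])
  finally show "rtrace (\<lambda>s s'. \<Sum>i. E i s s') \<le> b" .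
qed

text \<open>The partial sums of the traces of the exit terms \<open>G (F\<^sup>i \<rho>)\<close> telescope against the
  trace still left in the loop, which bounds the series.\<close>
lemma quantum_op_loop:
  fixes F G :: "('v::finite) mat \<Rightarrow> 'v mat"
  assumes F: "quantum_op F"
    and G: "\<And>\<sigma>. positive \<sigma> \<Longrightarrow> positive (G \<sigma>) \<and> rtrace (F \<sigma>) + rtrace (G \<sigma>) \<le> rtrace \<sigma>"
    and G_scale: "\<And>\<sigma> c. G (mscale c \<sigma>) = mscale c (G \<sigma>)"
  shows "quantum_op (\<lambda>\<rho> s s'. \<Sum>i. G ((F^^i) \<rho>) s s')"
proof (rule quantum_opI)
  fix \<rho> :: "'v mat"
  assume \<rho>: "positive \<rho>"
  have posF: "positive ((F^^i) \<rho>)" for i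
    by (induction i) (simp_all add: \<rho> quantum_opD(1)[OF F])
  have posE: "positive (G ((F^^i) \<rho>))" for i using G posF by blast
  have "(\<Sum>i<n. rtrace (G ((F^^i) \<rho>))) + rtrace ((F^^n) \<rho>) \<le> rtrace \<rho>" for n
  proof (induction n)
    case (Suc n)
    then show ?case using G[OF posF[of n]] by simp
  qed simp
  then have bnd: "(\<Sum>i<n. rtrace (G ((F^^i) \<rho>))) \<le> rtrace \<rho>" for n
    using rtrace_nonneg[OF posF[of n]] by (meson add_le_cancel_left le_add_same_cancel1 order_trans)
  show "positive (\<lambda>s s'. \<Sum>i. G ((F^^i) \<rho>) s s')" "rtrace (\<lambda>s s'. \<Sum>i. G ((F^^i) \<rho>) s s') \<le> rtrace \<rho>"
    using positive_entrywise_suminf[OF posE bnd] by blast+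
  fix c :: real
  assume c: "c \<ge> 0"
  have Fi: "(F^^i) (mscale (of_real c) \<rho>) = mscale (of_real c) ((F^^i) \<rho>)" for i
    by (induction i) (simp_all add: quantum_opD(3)[OF F posF c])
  have "G ((F^^i) (mscale (of_real c) \<rho>)) s s' = of_real c * G ((F^^i) \<rho>) s s'" for i s s'
    unfolding Fi G_scale by (simp add: mscale_def)
  then show "(\<lambda>s s'. \<Sum>i. G ((F^^i) (mscale (of_real c) \<rho>)) s s')
      = mscale (of_real c) (\<lambda>s s'. \<Sum>i. G ((F^^i) \<rho>) s s')"
    unfolding mscale_def
    by (intro ext) (simp add: suminf_mult summable_entries_of_bounded_rtrace(2)[OF posE bnd])
qed

lemma quantum_op_assert:
  fixes P :: "('v::finite) mat"
  assumes "projector_on (set qs) P"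
  shows "quantum_op (sem_assert qs P)"
  using sem_assert_split[OF assms] rtrace_nonneg
  by (intro quantum_opI) (fastforce simp: sem_assert_mscale)+

lemma quantum_op_branch:
  fixes P :: "('v::finite) mat"
  assumes P: "projector_on (set qs) P" and F1: "quantum_op F1" and F0: "quantum_op F0"
  shows "quantum_op (\<lambda>\<sigma>. madd (F1 (sem_assert qs P \<sigma>)) (F0 (sem_assert qs (orth (set qs) P) \<sigma>)))"
proof (rule quantum_opI)
  fix \<sigma> :: "'v mat" and c :: real
  assume "positive \<sigma>"
  note split = sem_assert_split[OF P this]
  show "positive (madd (F1 (sem_assert qs P \<sigma>)) (F0 (sem_assert qs (orth (set qs) P) \<sigma>)))"
    using split quantum_opD(1)[OF F1] quantum_opD(1)[OF F0] by (simp add: positive_madd)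
  show "rtrace (madd (F1 (sem_assert qs P \<sigma>)) (F0 (sem_assert qs (orth (set qs) P) \<sigma>))) \<le> rtrace \<sigma>"
    using split(3) quantum_opD(2)[OF F1 split(1)] quantum_opD(2)[OF F0 split(2)]
    by (simp add: rtrace_madd)
  show "c \<ge> 0 \<Longrightarrow> madd (F1 (sem_assert qs P (mscale (of_real c) \<sigma>))) (F0 (sem_assert qs (orth (set qs) P) (mscale (of_real c) \<sigma>)))
      = mscale (of_real c) (madd (F1 (sem_assert qs P \<sigma>)) (F0 (sem_assert qs (orth (set qs) P) \<sigma>)))"
    using split quantum_opD(3)[OF F1] quantum_opD(3)[OF F0] by (simp add: sem_assert_mscale madd_mscale)
qed

lemma quantum_op_while:
  fixes P :: "('v::finite) mat"
  assumes P: "projector_on (set qs) P" and F: "quantum_op F"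
  shows "quantum_op (\<lambda>\<rho> s s'. \<Sum>i. sem_assert qs (orth (set qs) P) (((F \<circ> sem_assert qs P)^^i) \<rho>) s s')"
proof (rule quantum_op_loop)
  show "quantum_op (F \<circ> sem_assert qs P)" by (rule quantum_op_comp[OF quantum_op_assert[OF P] F])
  show "positive (sem_assert qs (orth (set qs) P) \<sigma>) \<and>
      rtrace ((F \<circ> sem_assert qs P) \<sigma>) + rtrace (sem_assert qs (orth (set qs) P) \<sigma>) \<le> rtrace \<sigma>"
    if "positive \<sigma>" for \<sigma>
    using sem_assert_split[OF P that] quantum_opD(2)[OF F sem_assert_split(1)[OF P that]] by simp
qed (rule sem_assert_mscale)

lemma quantum_op_sem:
  fixes S :: "('v::finite) prog"
  assumes "wf_prog S"
  shows "quantum_op (sem S)"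
  using assms
proof (induction S)
  case Skip
  then show ?case by (simp add: quantum_op_def)
next
  case (Init qs)
  then show ?case using quantum_op_init by (simp add: fun_eq_iff)
next
  case (Apply qs U)
  then show ?case using quantum_op_apply[of "set qs" U] by (simp add: fun_eq_iff)
next
  case (Assert qs P)
  then show ?case using quantum_op_assert[of qs P] by (simp add: fun_eq_iff)
next
  case (Seq S0 S1)
  then show ?case using quantum_op_comp[of "sem S0" "sem S1"] by (simp add: comp_def)
next
  case (If qs P S1 S0)
  then show ?case using quantum_op_branch[of qs P "sem S1" "sem S0"] by (simp add: fun_eq_iff)
next
  case (While qs P S)
  then show ?case using quantum_op_while[of qs P "sem S"] by (simp add: comp_def fun_eq_iff)
qed

lemma sem_in_pdo: "wf_prog S \<Longrightarrow> \<rho> \<in> pdo \<Longrightarrow> sem S \<rho> \<in> pdo"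
  using quantum_opD(1,2)[OF quantum_op_sem] unfolding pdo_def rtrace_def by fastforce

lemma sem_mscale_trace:
  assumes "wf_prog S" "positive \<sigma>" "positive \<rho>"
  shows "sem S (mscale (mtrace \<sigma>) \<rho>) = mscale (mtrace \<sigma>) (sem S \<rho>)"
  unfolding mtrace_of_real_rtrace[OF assms(2)]
  using quantum_opD(3)[OF quantum_op_sem[OF assms(1)] assms(3) rtrace_nonneg[OF assms(2)]] .

section \<open>Well-structured abstractions\<close>

lemma pdo_mscale:
  fixes \<tau> :: "('v::finite) mat"
  assumes "\<tau> \<in> pdo" "0 \<le> t" "t \<le> 1"
  shows "mscale (complex_of_real t) \<tau> \<in> pdo"
proof -
  have \<tau>: "positive \<tau>" "rtrace \<tau> \<le> 1" using assms(1) unfolding pdo_def rtrace_def by auto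
  have "t * rtrace \<tau> \<le> 1" by (rule mult_le_one[OF assms(3) rtrace_nonneg[OF \<tau>(1)] \<tau>(2)])
  then show ?thesis
    using positive_mscale[OF \<tau>(1) assms(2)] rtrace_mscale[of t \<tau>] unfolding pdo_def rtrace_def by simp
qed

lemma mzero_in_pdo: "(mzero :: ('v::finite) mat) \<in> pdo"
  unfolding pdo_def using positive_mzero by (simp add: mtrace_def mzero_def)

lemma galois_embedding_alpha_eq_SUP:
  fixes \<alpha> :: "('v::finite) mat set \<Rightarrow> 'a::complete_lattice"
  assumes "galois_embedding \<alpha> \<gamma>" "C \<subseteq> pdo"
  shows "\<alpha> C = (SUP x\<in>C. \<alpha> {x})"
proof (rule antisym)
  have mono: "\<forall>c1 c2. c1 \<subseteq> c2 \<and> c2 \<subseteq> pdo \<longrightarrow> \<alpha> c1 \<le> \<alpha> c2"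
    using assms(1) unfolding galois_embedding_def by (elim conjE) assumption
  have adj: "\<forall>c a. c \<subseteq> pdo \<longrightarrow> (c \<subseteq> \<gamma> a \<longleftrightarrow> \<alpha> c \<le> a)"
    using assms(1) unfolding galois_embedding_def by (elim conjE) assumption
  have "x \<in> \<gamma> (SUP x\<in>C. \<alpha> {x})" if "x \<in> C" for x
  proof -
    have "\<alpha> {x} \<le> (SUP x\<in>C. \<alpha> {x})" using that by (rule SUP_upper)
    moreover have "{x} \<subseteq> pdo" using that assms(2) by blast
    ultimately show ?thesis using adj by blast
  qed
  then show "\<alpha> C \<le> (SUP x\<in>C. \<alpha> {x})" using adj assms(2) by blast
  show "(SUP x\<in>C. \<alpha> {x}) \<le> \<alpha> C"
    using mono assms(2) by (intro SUP_least) auto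
qed

lemma well_structured_alpha_msum:
  fixes \<alpha> :: "('v::finite) mat set \<Rightarrow> 'a::complete_lattice" and I :: "nat set"
  assumes "well_structured \<alpha> \<gamma>" "finite I" "I \<noteq> {}" "\<And>i. i \<in> I \<Longrightarrow> \<rho>s i \<in> pdo \<and> x i > 0"
    and "msum I (\<lambda>i. mscale (complex_of_real (x i)) (\<rho>s i)) \<in> pdo"
  shows "\<alpha> {msum I (\<lambda>i. mscale (complex_of_real (x i)) (\<rho>s i))} = (SUP i\<in>I. \<alpha> {\<rho>s i})"
  using assms unfolding well_structured_def by blast


lemma well_structured_alpha_mscale:
  fixes \<alpha> :: "('v::finite) mat set \<Rightarrow> 'a::complete_lattice"
  assumes ws: "well_structured \<alpha> \<gamma>" and \<tau>: "\<tau> \<in> pdo" and t: "0 < t" "t \<le> 1"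
  shows "\<alpha> {mscale (complex_of_real t) \<tau>} = \<alpha> {\<tau>}"
proof -
  have eq: "msum {0::nat} (\<lambda>_. mscale (complex_of_real t) \<tau>) = mscale (complex_of_real t) \<tau>"
    unfolding msum_def by simp
  have "\<alpha> {msum {0::nat} (\<lambda>_. mscale (complex_of_real t) \<tau>)} = (SUP i\<in>{0::nat}. \<alpha> {\<tau>})"
  proof (rule well_structured_alpha_msum[OF ws])
    show "msum {0::nat} (\<lambda>_. mscale (complex_of_real t) \<tau>) \<in> pdo"
      unfolding eq using t by (intro pdo_mscale[OF \<tau>]) simp_all
  qed (use \<tau> t in simp_all)
  then show ?thesis unfolding eq by simp
qed

lemma well_structured_alpha_mzero_le:
  fixes \<alpha> :: "('v::finite) mat set \<Rightarrow> 'a::complete_lattice"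
  assumes ws: "well_structured \<alpha> \<gamma>" and \<tau>: "\<tau> \<in> pdo"
  shows "\<alpha> {mzero} \<le> \<alpha> {\<tau>}"
proof -
  define \<rho>s where "\<rho>s = (\<lambda>i::nat. if i = 0 then \<tau> else mzero)"
  have eq: "msum {0, 1} (\<lambda>i. mscale (complex_of_real 1) (\<rho>s i)) = \<tau>"
    unfolding msum_def \<rho>s_def mscale_def mzero_def by simp
  have "\<alpha> {msum {0, 1} (\<lambda>i. mscale (complex_of_real 1) (\<rho>s i))} = (SUP i\<in>{0, 1}. \<alpha> {\<rho>s i})"
  proof (rule well_structured_alpha_msum[OF ws])
    show "msum {0, 1} (\<lambda>i. mscale (complex_of_real 1) (\<rho>s i)) \<in> pdo" unfolding eq by (rule \<tau>)
    show "\<And>i. i \<in> {0, 1} \<Longrightarrow> \<rho>s i \<in> pdo \<and> (0::real) < 1"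
      unfolding \<rho>s_def using \<tau> by (simp add: mzero_in_pdo)
  qed simp_all
  also have "\<dots> = sup (\<alpha> {\<tau>}) (\<alpha> {mzero})" unfolding \<rho>s_def by simp
  finally show ?thesis unfolding eq by (metis sup.cobounded2)
qed
lemma well_structured_alpha_trace_scaled:
  fixes \<alpha> :: "('v::finite) mat set \<Rightarrow> 'a::complete_lattice"
  assumes ws: "well_structured \<alpha> \<gamma>" and \<tau>: "\<tau> \<in> pdo"
    and R: "R \<subseteq> pdo" and ne: "\<exists>\<sigma>\<in>R. \<sigma> \<noteq> mzero"
  shows "\<alpha> ((\<lambda>\<sigma>. mscale (mtrace \<sigma>) \<tau>) ` R) = \<alpha> {\<tau>}"
proof -
  have tr: "mtrace \<sigma> = of_real (rtrace \<sigma>)" "0 \<le> rtrace \<sigma>" "rtrace \<sigma> \<le> 1"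
    "rtrace \<sigma> = 0 \<longleftrightarrow> \<sigma> = mzero" if "\<sigma> \<in> R" for \<sigma>
  proof -
    have \<sigma>: "positive \<sigma>" "rtrace \<sigma> \<le> 1" using that R unfolding pdo_def rtrace_def by auto
    show "mtrace \<sigma> = of_real (rtrace \<sigma>)" "0 \<le> rtrace \<sigma>" "rtrace \<sigma> \<le> 1"
      using \<sigma> by (simp_all add: mtrace_of_real_rtrace rtrace_nonneg)
    show "rtrace \<sigma> = 0 \<longleftrightarrow> \<sigma> = mzero"
      using positive_rtrace_eq_0[OF \<sigma>(1)] by (auto simp: rtrace_def mtrace_def mzero_def)
  qed
  have scaled: "\<alpha> {mscale (mtrace \<sigma>) \<tau>} = (if \<sigma> = mzero then \<alpha> {mzero} else \<alpha> {\<tau>})"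
    if "\<sigma> \<in> R" for \<sigma>
    using tr[OF that] well_structured_alpha_mscale[OF ws \<tau>, of "rtrace \<sigma>"]
    by (auto simp: mscale_def mzero_def)
  have "(\<lambda>\<sigma>. mscale (mtrace \<sigma>) \<tau>) ` R \<subseteq> pdo" using tr pdo_mscale[OF \<tau>] by auto
  moreover have "galois_embedding \<alpha> \<gamma>" using ws unfolding well_structured_def by blast
  ultimately have "\<alpha> ((\<lambda>\<sigma>. mscale (mtrace \<sigma>) \<tau>) ` R) = (SUP \<sigma>\<in>R. \<alpha> {mscale (mtrace \<sigma>) \<tau>})"
    by (simp add: galois_embedding_alpha_eq_SUP image_comp)
  also have "\<dots> = \<alpha> {\<tau>}"
  proof (rule antisym)
    show "(SUP \<sigma>\<in>R. \<alpha> {mscale (mtrace \<sigma>) \<tau>}) \<le> \<alpha> {\<tau>}"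
    proof (rule SUP_least)
      fix \<sigma> assume "\<sigma> \<in> R"
      then show "\<alpha> {mscale (mtrace \<sigma>) \<tau>} \<le> \<alpha> {\<tau>}"
        using scaled well_structured_alpha_mzero_le[OF ws \<tau>] by simp
    qed
    obtain \<sigma> where "\<sigma> \<in> R" "\<sigma> \<noteq> mzero" using ne by blast
    then show "\<alpha> {\<tau>} \<le> (SUP \<sigma>\<in>R. \<alpha> {mscale (mtrace \<sigma>) \<tau>})"
      using scaled[of \<sigma>] SUP_upper[of \<sigma> R "\<lambda>\<sigma>. \<alpha> {mscale (mtrace \<sigma>) \<tau>}"] by simp
  qed
  finally show ?thesis .
qed

section \<open>Gram decomposition of positive operators\<close>

definition schur_vec :: "('v::finite) mat \<Rightarrow> 'v bst \<Rightarrow> 'v bst \<Rightarrow> complex" where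
  "schur_vec \<rho> k = (\<lambda>s. \<rho> s k / complex_of_real (sqrt (Re (\<rho> k k))))"

lemma sesq_diff_scaled:
  "sesq A (\<lambda>x. v x - \<mu> * d x) (\<lambda>x. v x - \<mu> * d x)
     = sesq A v v - \<mu> * sesq A v d - cnj \<mu> * sesq A d v + cnj \<mu> * \<mu> * sesq A d d"
proof -
  have "mvmult A (\<lambda>x. v x - \<mu> * d x) = (\<lambda>s. mvmult A v s - \<mu> * mvmult A d s)"
    unfolding mvmult_def by (rule ext) (simp add: right_diff_distrib sum_subtractf sum_distrib_left mult.left_commute)
  then show ?thesis
    unfolding sesq_eq_vinner by (simp add: vinner_diff_left vinner_diff_right vinner_scale_left vinner_scale_right algebra_simps)
qed

text \<open>When \<open>\<rho> k k = 0\<close> the column \<open>k\<close> vanishes, and so does \<open>schur_vec \<rho> k\<close>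
  (division by \<open>sqrt 0 = 0\<close> yields \<open>0\<close>); the Schur complement is then \<open>\<rho>\<close> itself.\<close>
lemma schur_vec_zero:
  fixes \<rho> :: "('v::finite) mat"
  assumes "positive \<rho>" "Re (\<rho> k k) = 0"
  shows "schur_vec \<rho> k s = 0" "\<rho> k s = 0"
proof -
  have kk: "\<rho> k k = 0" using positive_diag(1)[OF assms(1), of k] assms(2) by (simp add: complex_eq_iff)
  show "\<rho> k s = 0" by (rule positive_zero_diag_row[of \<rho> k s, OF assms(1) kk])
  show "schur_vec \<rho> k s = 0"
    unfolding schur_vec_def using assms(2) by simp
qed

lemma schur_complement_positive:
  fixes \<rho> :: "('v::finite) mat"
  assumes pos: "positive \<rho>"
  shows "positive (msub \<rho> (outer (schur_vec \<rho> k) (schur_vec \<rho> k)))"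
proof (cases "Re (\<rho> k k) = 0")
  case True
  then have "msub \<rho> (outer (schur_vec \<rho> k) (schur_vec \<rho> k)) = \<rho>"
    unfolding msub_def outer_def by (simp add: schur_vec_zero[OF pos])
  then show ?thesis using pos by simp
next
  case False
  define r where "r = Re (\<rho> k k)"
  have r: "r > 0" using False positive_diag(2)[OF pos, of k] unfolding r_def by simp
  let ?c = "schur_vec \<rho> k"
  show ?thesis unfolding positive_iff_sesq
  proof
    fix v
    define p where "p = vinner (ket k) (mvmult \<rho> v)"
    have sr: "complex_of_real (sqrt r) * complex_of_real (sqrt r) = of_real r"
      using r by (simp flip: of_real_mult)
    have row: "cnj (\<rho> s k) = \<rho> k s" for s using positive_hermitian[OF pos, of k s] by simp
    have "vinner ?c v = p / of_real (sqrt r)"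
      unfolding p_def vinner_ket_left unfolding schur_vec_def vinner_def mvmult_def r_def
      by (simp add: sum_divide_distrib row)
    then have outer_part: "sesq (outer ?c ?c) v v = cnj p * p / of_real r"
      unfolding sesq_outer using sr by (simp add: field_simps)
    have s1: "sesq \<rho> (ket k) v = p" unfolding sesq_eq_vinner p_def ..
    have s2: "sesq \<rho> v (ket k) = cnj p"
      unfolding p_def vinner_ket_left sesq_eq_vinner mvmult_ket unfolding vinner_def mvmult_def
      by (simp add: row[symmetric] mult.commute)
    have s3: "sesq \<rho> (ket k) (ket k) = of_real r"
      unfolding sesq_eq_vinner vinner_ket_left mvmult_ket r_def by (rule positive_diag_of_real[OF pos])
    have "sesq \<rho> (\<lambda>x. v x - p / of_real r * ket k x) (\<lambda>x. v x - p / of_real r * ket k x)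
        = sesq \<rho> v v - cnj p * p / of_real r"
      unfolding sesq_diff_scaled s1 s2 s3 using r by (simp add: field_simps)
    also have "\<dots> = sesq (msub \<rho> (outer ?c ?c)) v v"
      unfolding outer_part[symmetric] sesq_def msub_def by (simp add: algebra_simps sum_subtractf)
    finally show "Im (sesq (msub \<rho> (outer ?c ?c)) v v) = 0 \<and> 0 \<le> Re (sesq (msub \<rho> (outer ?c ?c)) v v)"
      using positiveD[OF pos] by metis
  qed
qed

lemma schur_complement_row_zero:
  fixes \<rho> :: "('v::finite) mat"
  assumes pos: "positive \<rho>"
  shows "msub \<rho> (outer (schur_vec \<rho> k) (schur_vec \<rho> k)) k s = 0"
proof (cases "Re (\<rho> k k) = 0")
  case True
  then show ?thesis unfolding msub_def outer_def by (simp add: schur_vec_zero[OF pos])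
next
  case False
  let ?q = "complex_of_real (sqrt (Re (\<rho> k k)))"
  have r: "Re (\<rho> k k) > 0" using False positive_diag(2)[OF pos, of k] by simp
  then have q: "?q * ?q = \<rho> k k"
    using positive_diag(1)[OF pos, of k] by (simp add: complex_eq_iff)
  have "msub \<rho> (outer (schur_vec \<rho> k) (schur_vec \<rho> k)) k s = \<rho> k s - \<rho> k k * \<rho> k s / (?q * ?q)"
    unfolding msub_def outer_def schur_vec_def using positive_hermitian[OF pos, of s k] by simp
  also have "\<dots> = 0" unfolding q using False by (simp add: complex_eq_iff)
  finally show ?thesis .
qed

lemma positive_gram_decomposition_on:
  fixes K :: "('v::finite) bst set" and \<rho> :: "'v mat"
  assumes "finite K" "positive \<rho>" "\<And>s s'. s \<notin> K \<Longrightarrow> \<rho> s s' = 0"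
  shows "\<exists>a. \<rho> = msum K (\<lambda>k. outer (a k) (a k))"
  using assms
proof (induction K arbitrary: \<rho> rule: finite_induct)
  case empty
  then show ?case unfolding msum_def by auto
next
  case (insert k K)
  define c where "c = schur_vec (\<rho> :: 'v mat) k"
  have "\<exists>a. msub \<rho> (outer c c) = msum K (\<lambda>k. outer (a k) (a k))"
  proof (rule insert.IH)
    show "positive (msub \<rho> (outer c c))" unfolding c_def by (rule schur_complement_positive[OF insert.prems(1)])
    show "msub \<rho> (outer c c) s s' = 0" if "s \<notin> K" for s s'
    proof (cases "s = k")
      case True
      then show ?thesis unfolding c_def using schur_complement_row_zero[OF insert.prems(1)] by simp
    next
      case False
      then show ?thesis using that insert.prems(2) unfolding c_def msub_def outer_def schur_vec_def by simp
    qed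
  qed
  then obtain a where a: "msub \<rho> (outer c c) = msum K (\<lambda>k. outer (a k) (a k))" by blast
  let ?a = "a(k := c)"
  have "msum (insert k K) (\<lambda>j. outer (?a j) (?a j)) = madd (outer c c) (msum K (\<lambda>j. outer (?a j) (?a j)))"
    unfolding msum_def madd_def using insert.hyps by (intro ext) simp
  also have "msum K (\<lambda>j. outer (?a j) (?a j)) = msum K (\<lambda>j. outer (a j) (a j))"
    by (rule msum_cong) (use insert.hyps in auto)
  also have "madd (outer c c) (msum K (\<lambda>j. outer (a j) (a j))) = \<rho>"
    unfolding a[symmetric] madd_def msub_def by simp
  finally show ?case by (intro exI[of _ ?a]) simp
qed

lemma positive_gram_decomposition:
  fixes \<rho> :: "('v::finite) mat"
  assumes "positive \<rho>" shows "\<exists>a. \<rho> = msum (UNIV :: 'v bst set) (\<lambda>k. outer (a k) (a k))"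
  by (rule positive_gram_decomposition_on) (simp_all add: assms)

section \<open>Preparing density operators\<close>

lemma mscale_mscale: "mscale a (mscale b A) = mscale (a * b) A"
  unfolding mscale_def by (simp add: mult.assoc)

lemma mvmult_reflection:
  "mvmult (msub mident (mscale a (outer w w))) (v::('v::finite) bst \<Rightarrow> complex) = (\<lambda>s. v s - a * vinner w v * w s)"
proof -
  have "mvmult (msub mident (mscale a (outer w w))) v = (\<lambda>s. v s - (\<Sum>t\<in>UNIV. a * (w s * cnj (w t)) * v t))"
    unfolding mvmult_def msub_def mscale_def outer_def mident_def
    by (intro ext) (simp add: left_diff_distrib sum_subtractf if_distrib[where f = "\<lambda>x. x * _"] cong: if_cong)
  also have "\<dots> = (\<lambda>s. v s - a * vinner w v * w s)"
    unfolding vinner_def by (intro ext) (simp add: sum_distrib_left sum_distrib_right ac_simps)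
  finally show ?thesis .
qed

lemma unitary_reflection:
  fixes w :: "('v::finite) bst \<Rightarrow> complex"
  assumes "cnj a = a" "a * vinner w w = 2"
  shows "unitary_on UNIV (msub mident (mscale a (outer w w)))"
proof -
  let ?H = "msub mident (mscale a (outer w w))"
  have adj: "madj ?H = ?H" using assms(1) by (simp add: madj_msub madj_mscale madj_outer)
  have "?H ** ?H = msub (msub mident (mscale a (outer w w))) (mscale a (msub (outer w w) (mscale (a * vinner w w) (outer w w))))"
    by (simp add: mmult_msub_left mmult_msub_right mmult_mscale_left mmult_mscale_right outer_outer mscale_mscale)
  also have "\<dots> = mident"
    unfolding assms(2) msub_def mscale_def by (intro ext) (simp add: algebra_simps)
  finally show ?thesis using adj by (intro unitary_on_UNIV) simp_all
qed

lemma exists_phase_inner_real: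
  fixes b e :: "('v::finite) bst \<Rightarrow> complex"
  shows "\<exists>\<phi>. cnj \<phi> * \<phi> = 1 \<and> vinner (\<lambda>s. \<phi> * b s) e = of_real (cmod (vinner b e))"
proof -
  define i where "i = vinner b e"
  define \<phi> where "\<phi> = (if i = 0 then 1 else i / of_real (cmod i))"
  have sq: "cnj i * i = of_real (cmod i) * of_real (cmod i)"
    by (metis complex_norm_square mult.commute of_real_mult power2_eq_square)
  have "cnj \<phi> * \<phi> = 1" "cnj \<phi> * i = of_real (cmod i)"
    unfolding \<phi>_def using sq by (auto simp: field_simps)
  then show ?thesis unfolding vinner_scale_left i_def by blast
qed

text \<open>After fixing the phase of \<open>b\<close> so that \<open>\<langle>b,e\<rangle>\<close> is real, the reflection along
  \<open>e - b\<close> maps \<open>e\<close> to \<open>b\<close>.\<close>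
lemma unitary_maps_pure_state:
  fixes e b :: "('v::finite) bst \<Rightarrow> complex"
  assumes e: "vinner e e = 1" and b: "vinner b b = 1"
  shows "\<exists>H. unitary_on UNIV H \<and> H ** outer e e ** madj H = outer b b"
proof -
  obtain \<phi> where \<phi>: "cnj \<phi> * \<phi> = 1" and real: "vinner (\<lambda>s. \<phi> * b s) e = of_real (cmod (vinner b e))"
    using exists_phase_inner_real by blast
  define b' where "b' = (\<lambda>s. \<phi> * b s)"
  have ob: "outer b' b' = outer b b" unfolding b'_def outer_def using \<phi> by (intro ext) (simp add: algebra_simps)
  have b'b': "vinner b' b' = 1" unfolding b'_def vinner_scale_left vinner_scale_right using b \<phi> by (simp add: mult.assoc)
  have eb': "vinner e b' = vinner b' e" using real vinner_commute[of e b'] unfolding b'_def by simp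
  define w where "w = (\<lambda>s. e s - b' s)"
  have ww: "vinner w w = 2 * vinner w e"
    unfolding w_def vinner_diff_left vinner_diff_right e b'b' eb' by simp
  show ?thesis
  proof (cases "vinner w w = 0")
    case True
    then have "w = (\<lambda>_. 0)" by (rule vinner_self_eq_0)
    then have "e = b'" unfolding w_def by (simp add: fun_eq_iff)
    then have "mident ** outer e e ** madj mident = outer b b" using ob by simp
    moreover have "unitary_on UNIV (mident :: 'v mat)" by (rule unitary_on_UNIV) simp_all
    ultimately show ?thesis by blast
  next
    case False
    define a where "a = 2 / vinner w w"
    let ?H = "msub mident (mscale a (outer w w))"
    have "cnj (vinner w w) = vinner w w" using vinner_commute[of w w] by simp
    then have "cnj a = a" unfolding a_def by simp
    moreover have "a * vinner w w = 2" unfolding a_def using False by simp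
    ultimately have "unitary_on UNIV ?H" by (rule unitary_reflection)
    moreover have He: "mvmult ?H e = b'"
      unfolding mvmult_reflection using False ww unfolding a_def w_def by (intro ext) simp
    have "?H ** outer e e ** madj ?H = outer b b" unfolding outer_conj He ob ..
    ultimately show ?thesis by blast
  qed
qed

fun measure_apply :: "'v list \<Rightarrow> ('v bst \<Rightarrow> 'v mat) \<Rightarrow> 'v bst list \<Rightarrow> 'v prog" where
  "measure_apply qs Hs [] = Skip"
| "measure_apply qs Hs (k # ks) = If qs (ketbra k k) (Apply qs (Hs k)) (measure_apply qs Hs ks)"

definition mask_out :: "'v bst set \<Rightarrow> 'v mat \<Rightarrow> 'v mat" where
  "mask_out K M = (\<lambda>s s'. if s \<in> K \<or> s' \<in> K then 0 else M s s')"

lemma ketbra_mmult: "ketbra a b ** M = (\<lambda>s t. if s = a then M b t else (0::complex))"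
  unfolding ketbra_def mmult_def by (intro ext) (simp add: if_distrib[where f = "\<lambda>x. x * _"] cong: if_cong)

lemma mmult_ketbra: "M ** ketbra c d = (\<lambda>s t. if t = d then M s (c::('v::finite) bst) else 0)"
  unfolding ketbra_def mmult_def by (intro ext) (simp add: if_distrib[where f = "\<lambda>x. _ * x"] cong: if_cong)

lemma ketbra_sandwich: "ketbra a b ** M ** ketbra c (d::('v::finite) bst) = mscale (M b c) (ketbra a d)"
  unfolding mmult_ketbra ketbra_mmult unfolding mscale_def ketbra_def by (intro ext) auto

lemma complement_ketbra_sandwich:
  "msub mident (ketbra k k) ** M ** msub mident (ketbra k (k::('v::finite) bst)) = mask_out {k} M"
  unfolding mmult_msub_left mmult_msub_right mident_mmult mmult_mident ketbra_mmult mmult_ketbra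
  unfolding msub_def mask_out_def by (intro ext) auto

lemma wf_measure_apply:
  assumes "distinct qs" "set qs = UNIV" "\<And>k. unitary_on UNIV (Hs k)"
  shows "wf_prog (measure_apply qs Hs (ks :: ('v::finite) bst list))"
  by (induction ks) (use assms projector_on_ketbra in auto)

lemma sem_measure_apply:
  fixes ks :: "('v::finite) bst list"
  assumes qs: "set qs = UNIV" and ks: "distinct ks"
  shows "sem (measure_apply qs Hs ks) M
    = madd (msum (set ks) (\<lambda>k. mscale (M k k) (Hs k ** ketbra k k ** madj (Hs k)))) (mask_out (set ks) M)"
  using ks
proof (induction ks arbitrary: M)
  case Nil
  show ?case unfolding madd_def msum_def mask_out_def by (intro ext) simp
next
  case (Cons k ks)
  then have k: "k \<notin> set ks" and ks: "distinct ks" by simp_all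
  have yes: "sem_assert qs (ketbra k k) M = mscale (M k k) (ketbra k k)"
    unfolding sem_assert_def qs cyl_UNIV by (rule ketbra_sandwich)
  have no: "sem_assert qs (orth (set qs) (ketbra k k)) M = mask_out {k} M"
    unfolding sem_assert_def qs cyl_UNIV orth_def idW_UNIV by (rule complement_ketbra_sandwich)
  have "msum (set ks) (\<lambda>j. mscale (mask_out {k} M j j) (Hs j ** ketbra j j ** madj (Hs j)))
      = msum (set ks) (\<lambda>j. mscale (M j j) (Hs j ** ketbra j j ** madj (Hs j)))"
    by (rule msum_cong) (use k in \<open>auto simp: mask_out_def\<close>)
  moreover have "mask_out (set ks) (mask_out {k} M) = mask_out (set (k # ks)) M"
    unfolding mask_out_def by (intro ext) auto
  ultimately have "sem (measure_apply qs Hs (k # ks)) M = madd (Hs k ** mscale (M k k) (ketbra k k) ** madj (Hs k))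
      (madd (msum (set ks) (\<lambda>j. mscale (M j j) (Hs j ** ketbra j j ** madj (Hs j)))) (mask_out (set (k # ks)) M))"
    using yes no Cons.IH[OF ks] qs by (simp add: cyl_UNIV)
  also have "\<dots> = madd (msum (set (k # ks)) (\<lambda>k. mscale (M k k) (Hs k ** ketbra k k ** madj (Hs k))))
      (mask_out (set (k # ks)) M)"
    unfolding mmult_mscale_conj using k unfolding madd_def msum_def by (intro ext) (simp add: algebra_simps)
  finally show ?case .
qed

lemma sem_init_all:
  assumes "set qs = (UNIV :: ('v::finite) set)"
  shows "sem (Init qs) \<sigma> = mscale (mtrace \<sigma>) (ketbra (\<lambda>_. False) (\<lambda>_. False))"
proof -
  have "sem (Init qs) \<sigma> = msum UNIV (\<lambda>i. mscale (\<sigma> i i) (ketbra (\<lambda>_. False) (\<lambda>_. False)))"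
    unfolding sem.simps sem_init_def assms cyl_UNIV states_UNIV madj_ketbra ketbra_sandwich ..
  also have "\<dots> = mscale (mtrace \<sigma>) (ketbra (\<lambda>_. False) (\<lambda>_. False))"
    unfolding msum_def mscale_def mtrace_def by (intro ext) (simp add: sum_distrib_right)
  finally show ?thesis .
qed

text \<open>Prepare \<open>|w\<rangle>\<close> from \<open>|0\<dots>0\<rangle>\<close>, measure it in the computational basis, and rotate
  outcome \<open>|k\<rangle>\<close> to \<open>|u k\<rangle>\<close>: the result is the mixture of the \<open>|u k\<rangle>\<close> with weights \<open>|w k|\<^sup>2\<close>.\<close>
lemma exists_program_prepare_mixture:
  fixes w :: "('v::finite) bst \<Rightarrow> complex" and u :: "'v bst \<Rightarrow> 'v bst \<Rightarrow> complex"
  assumes w: "vinner w w = 1" and u: "\<And>k. vinner (u k) (u k) = 1"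
  shows "\<exists>S. wf_prog S \<and>
    (\<forall>\<sigma>. sem S \<sigma> = mscale (mtrace \<sigma>) (msum UNIV (\<lambda>k. mscale (w k * cnj (w k)) (outer (u k) (u k)))))"
proof -
  obtain qs :: "'v list" where qs: "distinct qs" "set qs = UNIV"
    using finite_distinct_list[of "UNIV :: 'v set"] by auto
  obtain ks :: "'v bst list" where ks: "distinct ks" "set ks = UNIV"
    using finite_distinct_list[of "UNIV :: 'v bst set"] by auto
  obtain H0 where H0: "unitary_on UNIV H0" "H0 ** ketbra (\<lambda>_. False) (\<lambda>_. False) ** madj H0 = outer w w"
    using unitary_maps_pure_state[OF vinner_ket_ket w] unfolding outer_ket by blast
  have "\<forall>k. \<exists>H. unitary_on UNIV H \<and> H ** ketbra k k ** madj H = outer (u k) (u k)"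
    using unitary_maps_pure_state[OF vinner_ket_ket u] unfolding outer_ket by blast
  then obtain Hs where Hs: "\<And>k. unitary_on UNIV (Hs k)" "\<And>k. Hs k ** ketbra k k ** madj (Hs k) = outer (u k) (u k)"
    by metis
  define S where "S = Seq (Init qs) (Seq (Apply qs H0) (measure_apply qs Hs ks))"
  have "wf_prog S" unfolding S_def using qs H0(1) wf_measure_apply[OF qs Hs(1)] by simp
  moreover have "sem S \<sigma> = mscale (mtrace \<sigma>) (msum UNIV (\<lambda>k. mscale (w k * cnj (w k)) (outer (u k) (u k))))" for \<sigma>
  proof -
    define M where "M = mscale (mtrace \<sigma>) (outer w w)"
    have "sem (Apply qs H0) (sem (Init qs) \<sigma>) = M"
      unfolding sem.simps(3) sem_init_all[OF qs(2)] qs(2) cyl_UNIV mmult_mscale_conj H0(2) M_def ..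
    then have "sem S \<sigma> = sem (measure_apply qs Hs ks) M" unfolding S_def by simp
    also have "\<dots> = msum UNIV (\<lambda>k. mscale (M k k) (outer (u k) (u k)))"
      unfolding sem_measure_apply[OF qs(2) ks(1)] ks(2) Hs(2) unfolding madd_def mask_out_def by simp
    also have "\<dots> = mscale (mtrace \<sigma>) (msum UNIV (\<lambda>k. mscale (w k * cnj (w k)) (outer (u k) (u k))))"
      unfolding M_def msum_def mscale_def outer_def by (intro ext) (simp add: sum_distrib_left ac_simps)
    finally show ?thesis .
  qed
  ultimately show ?thesis by blast
qed

text \<open>Normalising the Gram vectors \<open>a k = n\<^sub>k u\<^sub>k\<close>; the vectors with \<open>n\<^sub>k = 0\<close> get the
  arbitrary unit vector \<open>|k\<rangle>\<close> and weight \<open>0\<close>.\<close>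
lemma density_unit_mixture:
  fixes \<rho> :: "('v::finite) mat"
  assumes pos: "positive \<rho>" and tr: "mtrace \<rho> = 1"
  shows "\<exists>w u. vinner w w = 1 \<and> (\<forall>k. vinner (u k) (u k) = 1) \<and>
    \<rho> = msum (UNIV :: 'v bst set) (\<lambda>k. mscale (w k * cnj (w k)) (outer (u k) (u k)))"
proof -
  obtain a where a: "\<rho> = msum (UNIV :: 'v bst set) (\<lambda>k. outer (a k) (a k))"
    using positive_gram_decomposition[OF pos] by blast
  define n where "n k = sqrt (\<Sum>s\<in>UNIV. (cmod (a k s))\<^sup>2)" for k
  have aa: "vinner (a k) (a k) = complex_of_real ((n k)\<^sup>2)" for k
    unfolding vinner_self n_def by (simp add: sum_nonneg)
  define w where "w k = complex_of_real (n k)" for k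
  define u where "u k = (if n k = 0 then ket k else (\<lambda>s. a k s / of_real (n k)))" for k
  have "vinner w w = (\<Sum>k\<in>UNIV. complex_of_real ((n k)\<^sup>2))"
    unfolding w_def vinner_def by (simp add: power2_eq_square)
  also have "\<dots> = (\<Sum>k\<in>UNIV. vinner (a k) (a k))" unfolding aa ..
  also have "\<dots> = 1" using tr unfolding a mtrace_msum mtrace_outer .
  finally have "vinner w w = 1" .
  moreover have "vinner (u k) (u k) = 1" for k
  proof (cases "n k = 0")
    case False
    have "vinner (u k) (u k) = vinner (a k) (a k) / (of_real (n k) * of_real (n k))"
      unfolding u_def using False by (simp add: vinner_def sum_divide_distrib)
    then show ?thesis unfolding aa using False by (simp add: power2_eq_square)
  qed (simp add: u_def)
  moreover have "outer (a k) (a k) = mscale (w k * cnj (w k)) (outer (u k) (u k))" for k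
  proof (cases "n k = 0")
    case True
    then have "a k = (\<lambda>_. 0)" using aa by (intro vinner_self_eq_0) simp
    then show ?thesis unfolding w_def True mscale_def outer_def by (intro ext) simp
  next
    case False
    then show ?thesis unfolding w_def mscale_def outer_def u_def
      by (intro ext) (simp add: field_simps)
  qed
  ultimately show ?thesis unfolding a by (intro exI[of _ w] exI[of _ u]) simp
qed

lemma exists_program_prepare:
  fixes \<rho> :: "('v::finite) mat"
  assumes "positive \<rho>" "mtrace \<rho> = 1"
  shows "\<exists>S. wf_prog S \<and> (\<forall>\<sigma>. sem S \<sigma> = mscale (mtrace \<sigma>) \<rho>)"
proof -
  obtain w u where w: "vinner w w = 1" and u: "\<And>k. vinner (u k) (u k) = 1"
    and \<rho>: "\<rho> = msum (UNIV :: 'v bst set) (\<lambda>k. mscale (w k * cnj (w k)) (outer (u k) (u k)))"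
    using density_unit_mixture[OF assms] by blast
  show ?thesis unfolding \<rho> by (rule exists_program_prepare_mixture[OF w u])
qed

lemma sem_seq_preparation:
  assumes "wf_prog S" "positive \<rho>" "\<forall>\<sigma>\<in>pdo. sem S\<rho> \<sigma> = mscale (mtrace \<sigma>) \<rho>" "\<sigma> \<in> pdo"
  shows "sem (Seq S\<rho> S) \<sigma> = mscale (mtrace \<sigma>) (sem S \<rho>)"
proof -
  have "sem (Seq S\<rho> S) \<sigma> = sem S (mscale (mtrace \<sigma>) \<rho>)" using assms(3,4) by simp
  also have "\<dots> = mscale (mtrace \<sigma>) (sem S \<rho>)"
    using assms(4) sem_mscale_trace[OF assms(1) _ assms(2)] unfolding pdo_def by blast
  finally show ?thesis .
qed

theorem mainTheorem20:
  fixes \<rho> :: "('v::finite) mat"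
  assumes "\<rho> \<in> pdo" and "mtrace \<rho> = 1"
  shows "(\<exists>S\<rho>. wf_prog S\<rho> \<and> (\<forall>\<sigma>\<in>pdo. sem S\<rho> \<sigma> = mscale (mtrace \<sigma>) \<rho>)) \<and>
         (\<forall>S\<rho>. wf_prog S\<rho> \<and> (\<forall>\<sigma>\<in>pdo. sem S\<rho> \<sigma> = mscale (mtrace \<sigma>) \<rho>) \<longrightarrow>
            (\<forall>(\<alpha> :: 'v mat set \<Rightarrow> 'a::complete_lattice) \<gamma> S R.
               well_structured \<alpha> \<gamma> \<longrightarrow> wf_prog S \<longrightarrow> R \<subseteq> pdo \<longrightarrow> (\<exists>\<sigma>\<in>R. \<sigma> \<noteq> mzero) \<longrightarrow>
               \<alpha> (sem (Seq S\<rho> S) ` R) = \<alpha> (sem S ` {\<rho>})))"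
proof (intro conjI allI impI)
  have pos: "positive \<rho>" using assms(1) unfolding pdo_def by simp
  show "\<exists>S\<rho>. wf_prog S\<rho> \<and> (\<forall>\<sigma>\<in>pdo. sem S\<rho> \<sigma> = mscale (mtrace \<sigma>) \<rho>)"
    using exists_program_prepare[OF pos assms(2)] by blast
  fix S\<rho> S :: "'v prog" and R :: "'v mat set" and \<alpha> :: "'v mat set \<Rightarrow> 'a" and \<gamma>
  assume prep: "wf_prog S\<rho> \<and> (\<forall>\<sigma>\<in>pdo. sem S\<rho> \<sigma> = mscale (mtrace \<sigma>) \<rho>)"
    and ws: "well_structured \<alpha> \<gamma>" and S: "wf_prog S" and R: "R \<subseteq> pdo" and ne: "\<exists>\<sigma>\<in>R. \<sigma> \<noteq> mzero"
  have "sem (Seq S\<rho> S) ` R = (\<lambda>\<sigma>. mscale (mtrace \<sigma>) (sem S \<rho>)) ` R"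
    using sem_seq_preparation[OF S pos] prep R by (intro image_cong) auto
  then show "\<alpha> (sem (Seq S\<rho> S) ` R) = \<alpha> (sem S ` {\<rho>})"
    using well_structured_alpha_trace_scaled[OF ws sem_in_pdo[OF S assms(1)] R ne] by simp
qed

end
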